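(* (i) For all $n,k\in\mathbb N$, $\binom{n}{k}=l_{n,k}+2l_{n,k+1}$. (ii) For all $n\in\mathbb N$, the polynomial identity $x^n=(-1)^n+(x+1)\sum_{k=1}^nl_{n,k}(x-1)^{k-1}$ holds.
   Context: For $i,j\in\mathbb N$, $l_{i,j}=\sum_{k=0}^{i-j}\binom{\frac{i-1}{2}+y-k}{k}\binom{\frac{i-1}{2}+k-y}{i-j-k}$, where $\binom{z}{k}=\frac{z(z-1)\cdots(z-k+1)}{k!}$; this sum is a polynomial in the auxiliary variable $y$ which is constant in $y$, so $l_{i,j}$ is a well-defined number (e.g. its value at $y=0$). In particular $l_{i,j}=0$ for $j>i$ (empty sum). These numbers form a Pascal-like triangle starting with rows $1$; $-1,1$; $1,0,1$; $-1,1,1,1$; $1,0,2,2,1$. *)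

theory Defs
  imports "HOL-Computational_Algebra.Polynomial"
begin

definition l_poly :: "nat \<Rightarrow> nat \<Rightarrow> real \<Rightarrow> real" where
  "l_poly i j y = (if j > i then 0 else
     (\<Sum>k=0..i-j. ((real i - 1) / 2 + y - real k gchoose k)
                 * ((real i - 1) / 2 + real k - y gchoose (i - j - k))))"

text \<open>l_{i,j}: the (y-independent) value, taken at y = 0.\<close>
definition l :: "nat \<Rightarrow> nat \<Rightarrow> real" where
  "l i j = l_poly i j 0"

end

theory Submission
  imports Defs
begin

text \<open>
  Let \<open>c n m = \<Sum>i\<le>m. (n choose i) (-2)^(m-i)\<close> (\<open>binomial_neg2_conv\<close>),
  the coefficient of \<open>t^m\<close> in \<open>(1+t)^n / (1+2t)\<close>; then
  \<open>c n (m+1) + 2 c n m = n choose (m+1)\<close> and \<open>c n n = (-1)^n\<close>.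
  The sum defining \<open>l n j\<close> at \<open>y = 0\<close> is a convolution \<open>F N M (n-j)\<close>
  (\<open>gbinomial_conv\<close>) of two generalised binomial coefficients with \<open>N = M = (n-1)/2\<close>.
  Along the line \<open>N + M = n - 1\<close>, \<open>F\<close> satisfies Pascal's rule in \<open>(n, m)\<close>
  (shift \<open>M\<close> by one), just like \<open>c\<close>, and on the diagonal \<open>m = n\<close> it equals
  \<open>(-1)^n\<close> by an \<open>n\<close>-th finite difference computation.
  Hence \<open>l n j = c n (n-j)\<close>, which gives (i); (ii) is (i) applied to the binomial
  expansion of \<open>x^n = ((x-1)+1)^n\<close>.
\<close>

definition binomial_neg2_conv :: "nat \<Rightarrow> nat \<Rightarrow> real" where
  "binomial_neg2_conv n m = (\<Sum>i\<le>m. real (n choose i) * (-2) ^ (m - i))"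

lemma binomial_neg2_conv_0 [simp]: "binomial_neg2_conv n 0 = 1"
  by (simp add: binomial_neg2_conv_def)

lemma binomial_neg2_conv_Suc_Suc:
  "binomial_neg2_conv (Suc n) (Suc m) = binomial_neg2_conv n (Suc m) + binomial_neg2_conv n m"
proof -
  let ?s = "\<lambda>f. \<Sum>i\<le>m. real (f i) * (-2::real) ^ (m - i)"
  have "binomial_neg2_conv (Suc n) (Suc m) = (-2) ^ Suc m + ?s (\<lambda>i. Suc n choose Suc i)"
    unfolding binomial_neg2_conv_def by (subst sum.atMost_Suc_shift) simp
  also have "\<dots> = ((-2) ^ Suc m + ?s (\<lambda>i. n choose Suc i)) + ?s (\<lambda>i. n choose i)"
    by (simp add: sum.distrib algebra_simps)
  also have "(-2) ^ Suc m + ?s (\<lambda>i. n choose Suc i) = binomial_neg2_conv n (Suc m)"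
    unfolding binomial_neg2_conv_def by (subst sum.atMost_Suc_shift) simp
  finally show ?thesis
    by (simp add: binomial_neg2_conv_def)
qed

lemma binomial_neg2_conv_Suc:
  "binomial_neg2_conv n (Suc m) + 2 * binomial_neg2_conv n m = real (n choose Suc m)"
proof -
  have "(\<Sum>i\<le>m. real (n choose i) * (-2) ^ (Suc m - i)) = - 2 * binomial_neg2_conv n m"
    unfolding binomial_neg2_conv_def sum_distrib_left
    by (rule sum.cong) (auto simp: Suc_diff_le)
  then show ?thesis
    by (simp add: binomial_neg2_conv_def)
qed

lemma binomial_neg2_conv_diag: "binomial_neg2_conv n n = (-1) ^ n"
  using binomial_ring[of 1 "-2::real" n] by (simp add: binomial_neg2_conv_def)

definition gbinomial_conv :: "real \<Rightarrow> real \<Rightarrow> nat \<Rightarrow> real" where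
  "gbinomial_conv N M m = (\<Sum>k\<le>m. ((N - real k) gchoose k) * ((M + real k) gchoose (m - k)))"

lemma gbinomial_conv_0 [simp]: "gbinomial_conv N M 0 = 1"
  by (simp add: gbinomial_conv_def)

lemma gbinomial_conv_Suc:
  "gbinomial_conv N M (Suc m) = gbinomial_conv N (M - 1) (Suc m) + gbinomial_conv N (M - 1) m"
proof -
  have pascal: "(M + real k) gchoose Suc (m - k)
      = ((M - 1 + real k) gchoose Suc (m - k)) + ((M - 1 + real k) gchoose (m - k))" for k
    using gbinomial_Suc_Suc[of "M - 1 + real k" "m - k"] by simp
  have "gbinomial_conv N M (Suc m)
      = (\<Sum>k\<le>m. ((N - real k) gchoose k) * ((M + real k) gchoose Suc (m - k)))
        + ((N - real (Suc m)) gchoose Suc m)"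
    unfolding gbinomial_conv_def by (simp add: Suc_diff_le)
  then show ?thesis
    unfolding pascal by (simp add: gbinomial_conv_def Suc_diff_le sum.distrib algebra_simps)
qed

lemma alternating_binomial_sum_Suc:
  fixes f :: "nat \<Rightarrow> 'a::comm_ring_1"
  shows "(\<Sum>k\<le>Suc n. (-1) ^ k * of_nat (Suc n choose k) * f k)
       = (\<Sum>k\<le>n. (-1) ^ k * of_nat (n choose k) * (f k - f (Suc k)))"
proof -
  have "(\<Sum>k\<le>Suc n. (-1) ^ k * of_nat (Suc n choose k) * f k)
      = (f 0 + (\<Sum>i\<le>n. (-1) ^ Suc i * of_nat (n choose Suc i) * f (Suc i)))
        + (\<Sum>i\<le>n. (-1) ^ Suc i * of_nat (n choose i) * f (Suc i))"
    by (subst sum.atMost_Suc_shift) (simp add: sum.distrib[symmetric] algebra_simps)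
  also have "f 0 + (\<Sum>i\<le>n. (-1) ^ Suc i * of_nat (n choose Suc i) * f (Suc i))
      = (\<Sum>k\<le>n. (-1) ^ k * of_nat (n choose k) * f k)"
    using sum.atMost_Suc_shift[of "\<lambda>k. (-1) ^ k * of_nat (n choose k) * f k" n]
    by (simp add: binomial_eq_0)
  finally show ?thesis
    by (simp add: right_diff_distrib sum_subtractf sum_negf)
qed

lemma gbinomial_finite_difference:
  assumes "n \<le> r"
  shows "(\<Sum>k\<le>n. (-1) ^ k * real (n choose k) * ((N - real k) gchoose r))
       = (N - real n) gchoose (r - n)"
  using assms
proof (induction n arbitrary: N r)
  case 0
  then show ?case by simp
next
  case (Suc n)
  then obtain r' where r: "r = Suc r'" and "n \<le> r'"
    by (cases r) auto
  have "((N - real k) gchoose r) - ((N - real (Suc k)) gchoose r) = (N - 1 - real k) gchoose r'" for k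
    using gbinomial_Suc_Suc[of "N - 1 - real k" r'] by (simp add: r algebra_simps)
  then show ?case
    using alternating_binomial_sum_Suc[of n "\<lambda>k. (N - real k) gchoose r"]
      Suc.IH[OF \<open>n \<le> r'\<close>, of "N - 1"]
    by (simp add: r algebra_simps)
qed

lemma gbinomial_conv_diag:
  assumes "N + M = real n - 1"
  shows "gbinomial_conv N M n = (-1) ^ n"
proof -
  have summand: "((N - real k) gchoose k) * ((M + real k) gchoose (n - k))
      = (-1) ^ n * ((-1) ^ k * real (n choose k) * ((N - real k) gchoose n))" if "k \<le> n" for k
  proof -
    have "(M + real k) gchoose (n - k)
        = (-1) ^ (n - k) * ((of_nat (n - k) - (M + real k) - 1) gchoose (n - k))"
      by (rule gbinomial_negated_upper)
    also have "of_nat (n - k) - (M + real k) - 1 = N - real k - real k"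
      using that assms by simp
    finally have "(M + real k) gchoose (n - k)
        = (-1) ^ (n - k) * ((N - real k - real k) gchoose (n - k))" .
    moreover have "(-1::real) ^ (n - k) = (-1) ^ n * (-1) ^ k"
      using neg_one_power_add_eq_neg_one_power_diff[OF that] by (metis power_add)
    moreover have "((N - real k) gchoose k) * ((N - real k - real k) gchoose (n - k))
        = ((N - real k) gchoose n) * real (n choose k)"
      using gbinomial_trinomial_revision[OF that, of "N - real k"] by (simp add: binomial_gbinomial)
    ultimately show ?thesis
      by (simp add: algebra_simps)
  qed
  have "gbinomial_conv N M n
      = (-1) ^ n * (\<Sum>k\<le>n. (-1) ^ k * real (n choose k) * ((N - real k) gchoose n))"
    unfolding gbinomial_conv_def sum_distrib_left by (rule sum.cong) (simp_all add: summand)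
  then show ?thesis
    by (simp add: gbinomial_finite_difference)
qed

lemma gbinomial_conv_eq_binomial_neg2_conv:
  assumes "N + M = real n - 1" and "m \<le> n"
  shows "gbinomial_conv N M m = binomial_neg2_conv n m"
  using assms
proof (induction n arbitrary: M m)
  case 0
  then show ?case by simp
next
  case (Suc n)
  consider "m = Suc n" | "m = 0" | m' where "m = Suc m'" "m' < n"
    using Suc.prems(2) by (cases m) (auto simp: le_Suc_eq)
  then show ?case
  proof cases
    case 1
    then show ?thesis
      using gbinomial_conv_diag[OF Suc.prems(1)] by (simp add: binomial_neg2_conv_diag)
  next
    case 2
    then show ?thesis by simp
  next
    case 3
    have "N + (M - 1) = real n - 1"
      using Suc.prems(1) by simp
    with 3 have "gbinomial_conv N (M - 1) m = binomial_neg2_conv n m"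
      and "gbinomial_conv N (M - 1) m' = binomial_neg2_conv n m'"
      using Suc.IH by simp_all
    then show ?thesis
      unfolding 3 gbinomial_conv_Suc[of N M m'] by (simp add: binomial_neg2_conv_Suc_Suc)
  qed
qed

lemma l_eq_binomial_neg2_conv: "j \<le> n \<Longrightarrow> l n j = binomial_neg2_conv n (n - j)"
  using gbinomial_conv_eq_binomial_neg2_conv[of "(real n - 1) / 2" "(real n - 1) / 2" n "n - j"]
  by (simp add: l_def l_poly_def gbinomial_conv_def atLeast0AtMost)

lemma l_eq_0: "n < j \<Longrightarrow> l n j = 0"
  by (simp add: l_def l_poly_def)

lemma binomial_eq_l_add_twice_l: "real (n choose k) = l n k + 2 * l n (k + 1)"
proof (cases "k < n")
  case True
  then have "n - k = Suc (n - (k + 1))"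
    by simp
  then show ?thesis
    using True binomial_neg2_conv_Suc[of n "n - (k + 1)"] binomial_symmetric[of k n]
    by (simp add: l_eq_binomial_neg2_conv)
next
  case False
  then show ?thesis
    by (cases "k = n") (auto simp: l_eq_0 l_eq_binomial_neg2_conv)
qed

lemma sum_add_shift_mult_power:
  fixes a :: "nat \<Rightarrow> 'a::comm_ring_1"
  shows "(\<Sum>k\<le>n. (a k + c * a (Suc k)) * t ^ k)
       = a 0 + (t + c) * (\<Sum>k=1..n. a k * t ^ (k - 1)) + c * a (Suc n) * t ^ n"
  by (induction n) (simp_all add: algebra_simps)

lemma power_eq_l_expansion:
  "(x::real) ^ n = (-1) ^ n + (x + 1) * (\<Sum>k=1..n. l n k * (x - 1) ^ (k - 1))"
proof -
  have "x ^ n = (\<Sum>k\<le>n. real (n choose k) * (x - 1) ^ k)"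
    using binomial_ring[of "x - 1" 1 n] by (simp add: mult.commute)
  also have "\<dots> = (\<Sum>k\<le>n. (l n k + 2 * l n (Suc k)) * (x - 1) ^ k)"
    using binomial_eq_l_add_twice_l by simp
  also have "\<dots> = l n 0 + (x - 1 + 2) * (\<Sum>k=1..n. l n k * (x - 1) ^ (k - 1))
      + 2 * l n (Suc n) * (x - 1) ^ n"
    by (rule sum_add_shift_mult_power)
  also have "l n 0 = (-1) ^ n"
    by (simp add: l_eq_binomial_neg2_conv binomial_neg2_conv_diag)
  finally show ?thesis
    by (simp add: l_eq_0)
qed

theorem proposition4p7:
  shows "(\<forall>n k::nat. real (n choose k) = l n k + 2 * l n (k + 1))
       \<and> (\<forall>n::nat. [:0, 1::real:] ^ n
             = [:(-1) ^ n:] + [:1, 1:] * (\<Sum>k=1..n. smult (l n k) ([:-1, 1:] ^ (k - 1))))"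
proof (intro conjI allI)
  fix n k :: nat
  show "real (n choose k) = l n k + 2 * l n (k + 1)"
    by (rule binomial_eq_l_add_twice_l)
next
  fix n :: nat
  show "[:0, 1::real:] ^ n
      = [:(-1) ^ n:] + [:1, 1:] * (\<Sum>k=1..n. smult (l n k) ([:-1, 1:] ^ (k - 1)))"
  proof (rule poly_ext)
    fix x :: real
    show "poly ([:0, 1:] ^ n) x
        = poly ([:(-1) ^ n:] + [:1, 1:] * (\<Sum>k=1..n. smult (l n k) ([:-1, 1:] ^ (k - 1)))) x"
      using power_eq_l_expansion[of x n] by (simp add: poly_sum distrib_right)
  qed
qed

end
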